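(* Let $m\geq1$, let $\pi\in S_n$ produce the history $(T_1,\dots,T_n)$ and let $H=\Phi(T_1,\dots,T_n)$ be its historic tree. Suppose vertex $i$ of $H$ is a branching, so that inserting $\pi(i)$ splits a leaf, and let $K_i\in\{1,\dots,n\}$ be the median key of that leaf (the key pushed upwards from it). Let $j\in\{i+1,\dots,n\}$. Then $\pi(j)>K_i$ if $j$ is to the right of $i$ in $H$, and $\pi(j)<K_i$ otherwise. Moreover, if $j>i$ is also a branching, with $K_j$ the key pushed upwards from the leaf split at time $j$, then $K_j>K_i$ if $j$ is to the right of $i$, and $K_j<K_i$ otherwise.
   Context: A $B$-tree of order $2m+1$ is a rooted plane search tree whose nodes contain pairwise distinct keys in increasing left-to-right order, every non-root node has between $m$ and $2m$ keys, the root between $1$ and $2m$, all leaves have equal depth. Insertion: place the new key in the appropriate leaf; whenever a node has $2m+1$ keys, split it, moving the median key up into the parent and forming two nodes from the $m$ smallest and $m$ largest keys (new one-key root if the root splits). A permutation $\pi\in S_n$ used as key sequence means inserting $\pi(1),\dots,\pi(n)$ successively into the empty tree; the produced history is $(T_1,\dots,T_n)$ with $T_i$ the tree (up to isomorphism of rooted plane trees) after $i$ insertions; leaves are numbered left to right. A $(2m+1)$-historic tree on $n$ vertices is a rooted plane tree with vertices labelled bijectively by $\{1,\dots,n\}$, labels increasing along every root-to-leaf path, where (root at height $0$) vertices at heights $2m+j(m+1)$, $j\geq 0$, called branchings, have two ordered child slots (left, right), each possibly occupied, and all other vertices have a single child slot; unoccupied slots are external vertices, ordered left to right. $\Phi$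 maps a history to a historic tree recursively: $\Phi(T_1)$ is the one-vertex tree; if $T_{k+1}$ arises from $T_k$ by inserting into the $i$-th leaf of $T_k$ (before splits), then $\Phi(T_1,\dots,T_{k+1})$ is $\Phi(T_1,\dots,T_k)$ with a vertex labelled $k+1$ placed at its $i$-th external vertex. For a branching $i$ and a vertex $j>i$ of $H$ (so $j$ is not an ancestor of $i$), $j$ is "to the right of $i$" if either $j$ lies in the subtree of the right child of $i$, or $j$ is not a descendant of $i$ and, with $w$ the lowest common ancestor of $i$ and $j$ (a branching having $i$ and $j$ in different child subtrees), $j$ lies in the subtree of the right child of $w$. *)

theory Defs
  imports Main "HOL-Library.Sublist"
begin

text \<open>A node stores its keys in increasing order; an internal node with k keys has k+1 children.
  The empty tree is Leaf [].\<close>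
datatype btree = Leaf "nat list" | Node "nat list" "btree list"

datatype ires = Done btree | Up btree nat btree

definition cidx :: "nat list \<Rightarrow> nat \<Rightarrow> nat" where
  "cidx ks x = length (filter (\<lambda>k. k < x) ks)"

lemma size_nth_less: "i < length ts \<Longrightarrow> size (ts ! i) < Suc (size_list size ts)"
  using size_list_estimation'[OF nth_mem[of i ts], of "size (ts ! i)" size] by simp

definition leaf_res :: "nat \<Rightarrow> nat list \<Rightarrow> ires" where
  "leaf_res m ks' =
     (if length ks' \<le> 2*m then Done (Leaf ks')
      else Up (Leaf (take m ks')) (ks' ! m) (Leaf (drop (Suc m) ks')))"

definition node_res :: "nat \<Rightarrow> nat list \<Rightarrow> btree list \<Rightarrow> nat \<Rightarrow> ires \<Rightarrow> ires" where
  "node_res m ks ts i res =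
     (case res of
        Done t \<Rightarrow> Done (Node ks (ts[i := t]))
      | Up l k r \<Rightarrow>
          (let ks' = take i ks @ k # drop i ks;
               ts' = take i ts @ l # r # drop (Suc i) ts in
           if length ks' \<le> 2*m then Done (Node ks' ts')
           else Up (Node (take m ks') (take (Suc m) ts')) (ks' ! m)
                   (Node (drop (Suc m) ks') (drop (Suc m) ts'))))"

function ins :: "nat \<Rightarrow> nat \<Rightarrow> btree \<Rightarrow> ires" where
  "ins m x (Leaf ks) = leaf_res m (insort x ks)"
| "ins m x (Node ks ts) =
     (if cidx ks x < length ts then node_res m ks ts (cidx ks x) (ins m x (ts ! cidx ks x))
      else Done (Node ks ts))"
  by pat_completeness auto
termination
  by (relation "measure (\<lambda>(m,x,t). size t)") (auto simp: size_nth_less)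

text \<open>Insertion of x into the B-tree t of order 2m+1 (new one-key root if the root splits).\<close>
definition binsert :: "nat \<Rightarrow> nat \<Rightarrow> btree \<Rightarrow> btree" where
  "binsert m x t = (case ins m x t of Done t' \<Rightarrow> t' | Up l k r \<Rightarrow> Node [k] [l, r])"

fun nleaves :: "btree \<Rightarrow> nat" where
  "nleaves (Leaf ks) = 1"
| "nleaves (Node ks ts) = sum_list (map nleaves ts)"

text \<open>0-based left-to-right index of the leaf into which x is placed.\<close>
function leaf_index :: "btree \<Rightarrow> nat \<Rightarrow> nat" where
  "leaf_index (Leaf ks) x = 0"
| "leaf_index (Node ks ts) x =
     (if cidx ks x < length ts
      then sum_list (map nleaves (take (cidx ks x) ts)) + leaf_index (ts ! cidx ks x) x else 0)"
  by pat_completeness auto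
termination
  by (relation "measure (\<lambda>(t,x). size t)") (auto simp: size_nth_less)

function leaf_keys :: "btree \<Rightarrow> nat \<Rightarrow> nat list" where
  "leaf_keys (Leaf ks) x = ks"
| "leaf_keys (Node ks ts) x =
     (if cidx ks x < length ts then leaf_keys (ts ! cidx ks x) x else [])"
  by pat_completeness auto
termination
  by (relation "measure (\<lambda>(t,x). size t)") (auto simp: size_nth_less)

fun btree_hist :: "nat \<Rightarrow> (nat \<Rightarrow> nat) \<Rightarrow> nat \<Rightarrow> btree" where
  "btree_hist m \<pi> 0 = Leaf []"
| "btree_hist m \<pi> (Suc k) = binsert m (\<pi> (Suc k)) (btree_hist m \<pi> k)"

text \<open>Median key of the leaf receiving pi i at time i: the (m+1)-th smallest among the leaf's
  keys together with pi i (this is the key pushed up when the leaf splits).\<close>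
definition median_key :: "nat \<Rightarrow> (nat \<Rightarrow> nat) \<Rightarrow> nat \<Rightarrow> nat" where
  "median_key m \<pi> i = insort (\<pi> i) (leaf_keys (btree_hist m \<pi> (i - 1)) (\<pi> i)) ! m"

text \<open>Ext is an unoccupied slot (external vertex); HV l cs is a vertex labelled l with
  child slots cs (two slots [left, right] at a branching, one slot otherwise).\<close>
datatype htree = Ext | HV nat "htree list"

definition branching_height :: "nat \<Rightarrow> nat \<Rightarrow> bool" where
  "branching_height m h \<longleftrightarrow> 2*m \<le> h \<and> (h - 2*m) mod (m+1) = 0"

definition arity :: "nat \<Rightarrow> nat \<Rightarrow> nat" where
  "arity m h = (if branching_height m h then 2 else 1)"

fun nexts :: "htree \<Rightarrow> nat" where
  "nexts Ext = 1"
| "nexts (HV l ts) = sum_list (map nexts ts)"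

text \<open>place m h t i l: put a vertex labelled l at the i-th (0-based) external vertex of t,
  where the root of t is at height h.\<close>
fun place :: "nat \<Rightarrow> nat \<Rightarrow> htree \<Rightarrow> nat \<Rightarrow> nat \<Rightarrow> htree"
and place_list :: "nat \<Rightarrow> nat \<Rightarrow> htree list \<Rightarrow> nat \<Rightarrow> nat \<Rightarrow> htree list" where
  "place m h Ext i l = HV l (replicate (arity m h) Ext)"
| "place m h (HV l' ts) i l = HV l' (place_list m (Suc h) ts i l)"
| "place_list m h [] i l = []"
| "place_list m h (t # ts) i l =
     (if i < nexts t then place m h t i l # ts else t # place_list m h ts (i - nexts t) l)"

text \<open>Phi: the historic tree of the history produced by the first k keys
  (hist 0 is the empty tree with a single external vertex; hist 1 is the one-vertex tree).\<close>
fun hist :: "nat \<Rightarrow> (nat \<Rightarrow> nat) \<Rightarrow> nat \<Rightarrow> htree" where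
  "hist m \<pi> 0 = Ext"
| "hist m \<pi> (Suc k) =
     place m 0 (hist m \<pi> k) (leaf_index (btree_hist m \<pi> k) (\<pi> (Suc k))) (Suc k)"

text \<open>Subtree at a path of child-slot indices (root = []).\<close>
fun subt :: "htree \<Rightarrow> nat list \<Rightarrow> htree" where
  "subt t [] = t"
| "subt Ext (c # p) = Ext"
| "subt (HV l ts) (c # p) = (if c < length ts then subt (ts ! c) p else Ext)"

definition vertex_at :: "htree \<Rightarrow> nat list \<Rightarrow> nat \<Rightarrow> bool" where
  "vertex_at H p l \<longleftrightarrow> (\<exists>ts. subt H p = HV l ts)"

definition is_branching :: "nat \<Rightarrow> htree \<Rightarrow> nat \<Rightarrow> bool" where
  "is_branching m H l \<longleftrightarrow> (\<exists>p. vertex_at H p l \<and> branching_height m (length p))"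

fun common_prefix :: "nat list \<Rightarrow> nat list \<Rightarrow> nat list" where
  "common_prefix (a # as) (b # bs) = (if a = b then a # common_prefix as bs else [])"
| "common_prefix _ _ = []"

text \<open>Vertex j is to the right of the branching i: j is in the subtree of the right child (slot 1)
  of i, or j is not a descendant of i and j is in the subtree of the right child of the lowest
  common ancestor w of i and j.\<close>
definition right_of :: "htree \<Rightarrow> nat \<Rightarrow> nat \<Rightarrow> bool" where
  "right_of H i j \<longleftrightarrow> (\<exists>p q. vertex_at H p i \<and> vertex_at H q j \<and>
      (prefix (p @ [1]) q \<or>
       (\<not> prefix p q \<and> prefix (common_prefix p q @ [1]) q)))"

end

theory Submission
  imports Defs
begin

text \<open>
  Flatten a B-tree into the in-order sequence of its leaves and separating keys. Inserting a key
  changes this sequence only locally: the receiving leaf is replaced by itself plus the key or, if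
  that overflows, by two leaves around its median, while splits further up merely regroup the
  sequence. Meanwhile \<open>hist\<close> places the new vertex at the external vertex with the same index,
  and by induction the leaves of \<open>T\<^sub>t\<close> correspond left to right to the external vertices of
  \<open>H\<^sub>t\<close>, the size of a leaf being determined by the height of its external vertex; so a leaf
  overflows exactly when its external vertex is at a branching height.

  Hence the median \<open>K\<^sub>i\<close> pushed up at time \<open>i\<close> remains a separator from then on, and the
  separators up to \<open>K\<^sub>i\<close> are as many as the external vertices left of the right child of \<open>i\<close>.
  A later key \<open>\<pi> j\<close> lands in the leaf at the external vertex where \<open>j\<close> is placed, so it, and
  the median \<open>K\<^sub>j\<close> of that leaf, is smaller than \<open>K\<^sub>i\<close> exactly when \<open>j\<close> is placed left of
  the right child of \<open>i\<close>, that is, when \<open>j\<close> is not to the right of \<open>i\<close>.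
\<close>

section \<open>In-order flattening of B-trees\<close>

datatype flat_item = Lf "nat list" | Sep nat

fun flatten :: "btree \<Rightarrow> flat_item list"
  and flatten_list :: "btree list \<Rightarrow> nat list \<Rightarrow> flat_item list" where
  "flatten (Leaf ks) = [Lf ks]"
| "flatten (Node ks ts) = flatten_list ts ks"
| "flatten_list [] ks = []"
| "flatten_list [t] [] = flatten t"
| "flatten_list (t # ts) (k # ks) = flatten t @ Sep k # flatten_list ts ks"
| "flatten_list (t # t' # ts) [] = []"

fun item_keys :: "flat_item list \<Rightarrow> nat list" where
  "item_keys [] = []"
| "item_keys (Lf ks # F) = ks @ item_keys F"
| "item_keys (Sep k # F) = k # item_keys F"

fun item_leaves :: "flat_item list \<Rightarrow> nat list list" where
  "item_leaves [] = []"
| "item_leaves (Lf ks # F) = ks # item_leaves F"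
| "item_leaves (Sep k # F) = item_leaves F"

fun item_seps :: "flat_item list \<Rightarrow> nat list" where
  "item_seps [] = []"
| "item_seps (Lf ks # F) = item_seps F"
| "item_seps (Sep k # F) = k # item_seps F"

abbreviation btree_keys :: "btree \<Rightarrow> nat list" where
  "btree_keys t \<equiv> item_keys (flatten t)"

abbreviation btree_leaves :: "btree \<Rightarrow> nat list list" where
  "btree_leaves t \<equiv> item_leaves (flatten t)"

abbreviation btree_seps :: "btree \<Rightarrow> nat list" where
  "btree_seps t \<equiv> item_seps (flatten t)"

lemma item_keys_append [simp]: "item_keys (F @ G) = item_keys F @ item_keys G"
  by (induction F rule: item_keys.induct) auto

lemma item_leaves_append [simp]: "item_leaves (F @ G) = item_leaves F @ item_leaves G"
  by (induction F rule: item_leaves.induct) auto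

lemma item_seps_append [simp]: "item_seps (F @ G) = item_seps F @ item_seps G"
  by (induction F rule: item_seps.induct) auto

lemma set_item_seps_subset: "set (item_seps F) \<subseteq> set (item_keys F)"
  by (induction F rule: item_seps.induct) auto

fun wf_btree :: "btree \<Rightarrow> bool" where
  "wf_btree (Leaf ks) = True"
| "wf_btree (Node ks ts) = (length ts = Suc (length ks) \<and> (\<forall>t\<in>set ts. wf_btree t))"

fun flatten_res :: "ires \<Rightarrow> flat_item list" where
  "flatten_res (Done t) = flatten t"
| "flatten_res (Up l k r) = flatten l @ Sep k # flatten r"

fun wf_res :: "ires \<Rightarrow> bool" where
  "wf_res (Done t) = wf_btree t"
| "wf_res (Up l k r) = (wf_btree l \<and> wf_btree r)"

lemma flatten_list_append:
  "length ts = length ks \<Longrightarrow>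
   flatten_list (ts @ us) (ks @ ls) = flatten_list ts ks @ flatten_list us ls"
  by (induction ts ks rule: list_induct2) auto

lemma flatten_list_Cons:
  "length ts = length ks \<Longrightarrow>
   flatten_list (t # ts) ks = flatten t @ (case ks of [] \<Rightarrow> [] | k # ks' \<Rightarrow> Sep k # flatten_list ts ks')"
  by (cases ks; cases ts) auto

lemma flatten_list_shape:
  assumes "length ks \<le> length ts" "length ts \<le> Suc (length ks)"
  shows "item_leaves (flatten_list ts ks) = concat (map btree_leaves ts)"
    and "length (item_seps (flatten_list ts ks)) = (\<Sum>t\<leftarrow>ts. length (btree_seps t)) + length ks"
    and "set ks \<subseteq> set (item_keys (flatten_list ts ks))"
  using assms
proof (induction ks arbitrary: ts)
  case Nil
  { case 1 then show ?case by (cases ts) auto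
  next case 2 then show ?case by (cases ts) auto
  next case 3 then show ?case by simp }
next
  case (Cons k ks)
  { case 1 then show ?case using Cons.IH(1) by (cases ts) auto
  next case 2 then show ?case using Cons.IH(2) by (cases ts) auto
  next case 3 then show ?case using Cons.IH(3) by (cases ts) auto }
qed

lemma length_btree_leaves:
  "wf_btree t \<Longrightarrow> length (btree_leaves t) = nleaves t \<and> length (btree_leaves t) = Suc (length (btree_seps t))"
proof (induction t)
  case (Leaf ks)
  then show ?case by simp
next
  case (Node ks ts)
  have len: "length ts = Suc (length ks)"
    using Node.prems by simp
  have IH1: "length (btree_leaves t) = nleaves t"
    and IH2: "length (btree_leaves t) = Suc (length (btree_seps t))" if "t \<in> set ts" for t
    using Node.IH[OF that] Node.prems that by simp_all
  have leaves: "btree_leaves (Node ks ts) = concat (map btree_leaves ts)"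
    using flatten_list_shape(1)[of ks ts] len by simp
  have "length (btree_leaves (Node ks ts)) = (\<Sum>t\<leftarrow>ts. nleaves t)"
    using IH1 unfolding leaves by (simp add: length_concat comp_def cong: map_cong)
  moreover have "length (btree_leaves (Node ks ts)) = (\<Sum>t\<leftarrow>ts. Suc (length (btree_seps t)))"
    using IH2 unfolding leaves by (simp add: length_concat comp_def cong: map_cong)
  moreover have "(\<Sum>t\<leftarrow>ts. Suc (length (btree_seps t))) = (\<Sum>t\<leftarrow>ts. length (btree_seps t)) + length ts"
    by (rule sum_list_Suc)
  ultimately show ?case
    using flatten_list_shape(2)[of ks ts] len by simp
qed

section \<open>Locality of insertion\<close>

definition flatten_before :: "btree list \<Rightarrow> nat list \<Rightarrow> nat \<Rightarrow> flat_item list" where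
  "flatten_before ts ks c = flatten_list (take c ts) (take c ks)"

definition flatten_after :: "btree list \<Rightarrow> nat list \<Rightarrow> nat \<Rightarrow> flat_item list" where
  "flatten_after ts ks c =
     (case drop c ks of [] \<Rightarrow> [] | k # ks' \<Rightarrow> Sep k # flatten_list (drop (Suc c) ts) ks')"

lemma flatten_list_update:
  assumes "length ts = Suc (length ks)" "c < length ts"
  shows "flatten_list (ts[c := t]) ks = flatten_before ts ks c @ flatten t @ flatten_after ts ks c"
proof -
  have "flatten_list (take c ts @ t # drop (Suc c) ts) (take c ks @ drop c ks) =
        flatten_before ts ks c @ flatten_list (t # drop (Suc c) ts) (drop c ks)"
    unfolding flatten_before_def using assms by (intro flatten_list_append) simp
  moreover have "flatten_list (t # drop (Suc c) ts) (drop c ks) = flatten t @ flatten_after ts ks c"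
    unfolding flatten_after_def using assms by (intro flatten_list_Cons) simp
  ultimately show ?thesis
    using assms by (simp add: upd_conv_take_nth_drop)
qed

lemma flatten_list_insert:
  assumes "length ts = Suc (length ks)" "c < length ts"
  shows "flatten_list (take c ts @ l # r # drop (Suc c) ts) (take c ks @ k # drop c ks) =
         flatten_before ts ks c @ flatten l @ Sep k # flatten r @ flatten_after ts ks c"
proof -
  have "flatten_list (take c ts @ l # r # drop (Suc c) ts) (take c ks @ k # drop c ks) =
        flatten_before ts ks c @ flatten_list (l # r # drop (Suc c) ts) (k # drop c ks)"
    unfolding flatten_before_def using assms by (intro flatten_list_append) simp
  moreover have "flatten_list (r # drop (Suc c) ts) (drop c ks) = flatten r @ flatten_after ts ks c"
    unfolding flatten_after_def using assms by (intro flatten_list_Cons) simp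
  ultimately show ?thesis by simp
qed

lemma flatten_list_split:
  assumes "length ts = Suc (length ks)" "i < length ks"
  shows "flatten_list ts ks = flatten_list (take (Suc i) ts) (take i ks) @
           Sep (ks ! i) # flatten_list (drop (Suc i) ts) (drop (Suc i) ks)"
proof -
  have "flatten_list ts ks = flatten_before ts ks i @ flatten (ts ! i) @ flatten_after ts ks i"
    using flatten_list_update[OF assms(1), of i "ts ! i"] assms by simp
  moreover have "flatten_list (take i ts @ [ts ! i]) (take i ks @ []) = flatten_before ts ks i @ flatten (ts ! i)"
    unfolding flatten_before_def using assms by (subst flatten_list_append) auto
  moreover have "take (Suc i) ts = take i ts @ [ts ! i]"
    using assms by (simp add: take_Suc_conv_app_nth)
  moreover have "drop i ks = ks ! i # drop (Suc i) ks"
    using assms by (simp add: Cons_nth_drop_Suc)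
  ultimately show ?thesis
    using assms by (simp add: flatten_after_def)
qed

lemma flatten_res_node_res:
  assumes len: "length ts = Suc (length ks)" and wf: "\<forall>t\<in>set ts. wf_btree t"
    and c: "c < length ts" and res: "wf_res res"
  shows "flatten_res (node_res m ks ts c res) = flatten_before ts ks c @ flatten_res res @ flatten_after ts ks c
         \<and> wf_res (node_res m ks ts c res)"
proof (cases res)
  case (Done t)
  then show ?thesis
    using flatten_list_update[OF len c] len wf res c
    by (auto simp: node_res_def dest: set_update_subset_insert[THEN subsetD])
next
  case (Up l k r)
  define ks' where "ks' = take c ks @ k # drop c ks"
  define ts' where "ts' = take c ts @ l # r # drop (Suc c) ts"
  have len': "length ts' = Suc (length ks')"
    unfolding ks'_def ts'_def using len c by simp
  have flat': "flatten_list ts' ks' = flatten_before ts ks c @ flatten_res res @ flatten_after ts ks c"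
    unfolding ks'_def ts'_def using flatten_list_insert[OF len c] Up by simp
  have wf': "\<forall>t\<in>set ts'. wf_btree t"
    unfolding ts'_def using wf res Up by (auto dest: in_set_takeD in_set_dropD)
  show ?thesis
  proof (cases "length ks' \<le> 2*m")
    case True
    then show ?thesis
      using Up flat' len' wf' by (simp add: node_res_def ks'_def ts'_def)
  next
    case False
    then have m_less: "m < length ks'" by simp
    show ?thesis
      using Up False flat' flatten_list_split[OF len' m_less] len' wf'
      by (simp add: node_res_def Let_def flip: ks'_def ts'_def) (auto dest: in_set_takeD in_set_dropD)
  qed
qed

lemma sorted_wrt_nth_iff_less_length_filter:
  assumes "sorted_wrt R xs" and "\<And>a b. R a b \<Longrightarrow> Q b \<Longrightarrow> Q a" and "e < length xs"
  shows "Q (xs ! e) \<longleftrightarrow> e < length (filter Q xs)"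
  using assms
proof (induction xs arbitrary: e)
  case Nil
  then show ?case by simp
next
  case (Cons a xs)
  show ?case
  proof (cases "Q a")
    case True
    then show ?thesis using Cons by (cases e) auto
  next
    case False
    then have "filter Q xs = []"
      using Cons.prems(1,2) by (auto simp: filter_empty_conv)
    moreover have "\<not> Q ((a # xs) ! e)"
      using False Cons.prems by (cases e) (auto, meson nth_mem)
    ultimately show ?thesis using False by simp
  qed
qed

lemma sorted_node_keys:
  "length ts = Suc (length ks) \<Longrightarrow> sorted_wrt (<) (item_keys (flatten_list ts ks)) \<Longrightarrow> sorted_wrt (<) ks"
proof (induction ks arbitrary: ts)
  case Nil
  then show ?case by simp
next
  case (Cons k ks)
  then show ?case
    using flatten_list_shape(3)[of ks "tl ts"] by (cases ts) (auto simp: sorted_wrt_append)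
qed

lemma keys_around_cidx:
  assumes len: "length ts = Suc (length ks)"
    and sorted: "sorted_wrt (<) (btree_keys (Node ks ts))"
    and fresh: "x \<notin> set (btree_keys (Node ks ts))"
  shows "\<forall>k\<in>set (item_keys (flatten_before ts ks (cidx ks x))). k < x"
    and "\<forall>k\<in>set (item_keys (flatten_after ts ks (cidx ks x))). x < k"
proof -
  define c where "c = cidx ks x"
  have c_le: "c \<le> length ks"
    unfolding c_def cidx_def by simp
  have flat: "btree_keys (Node ks ts) =
      item_keys (flatten_before ts ks c) @ btree_keys (ts ! c) @ item_keys (flatten_after ts ks c)"
    using flatten_list_update[OF len, of c "ts ! c"] c_le len by simp
  have sorted_ks: "sorted_wrt (<) ks"
    using sorted_node_keys[OF len] sorted by simp
  have sorted_parts: "sorted_wrt (<) (item_keys (flatten_before ts ks c))"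
    "sorted_wrt (<) (item_keys (flatten_after ts ks c))"
    using sorted unfolding flat by (simp_all add: sorted_wrt_append)
  have ks_less_iff: "ks ! j < x \<longleftrightarrow> j < c" if "j < length ks" for j
    unfolding c_def cidx_def using that by (intro sorted_wrt_nth_iff_less_length_filter[OF sorted_ks]) auto
  have "\<forall>k\<in>set (item_keys (flatten_before ts ks c)). k < x"
  proof (cases c)
    case 0
    then show ?thesis by (simp add: flatten_before_def)
  next
    case (Suc c')
    have "take c ts = take c' ts @ [ts ! c']" "take c ks = take c' ks @ [ks ! c']"
      using Suc c_le len by (simp_all add: take_Suc_conv_app_nth)
    then have "flatten_before ts ks c = flatten_list (take c' ts) (take c' ks) @ flatten_list [ts ! c'] [ks ! c']"
      unfolding flatten_before_def using Suc c_le len by (simp add: flatten_list_append)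
    then have "item_keys (flatten_before ts ks c) =
        (item_keys (flatten_list (take c' ts) (take c' ks)) @ btree_keys (ts ! c')) @ [ks ! c']"
      by simp
    moreover have "ks ! c' < x"
      using ks_less_iff[of c'] Suc c_le by simp
    ultimately show ?thesis
      using sorted_parts(1) by (fastforce simp: sorted_wrt_append)
  qed
  then show "\<forall>k\<in>set (item_keys (flatten_before ts ks (cidx ks x))). k < x"
    by (simp add: c_def)
  have "\<forall>k\<in>set (item_keys (flatten_after ts ks c)). x < k"
  proof (cases "c < length ks")
    case False
    then show ?thesis
      using c_le by (simp add: flatten_after_def)
  next
    case True
    then have keys_after: "item_keys (flatten_after ts ks c) =
        ks ! c # item_keys (flatten_list (drop (Suc c) ts) (drop (Suc c) ks))"
      by (simp add: flatten_after_def flip: Cons_nth_drop_Suc)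
    have "x \<le> ks ! c"
      using ks_less_iff[of c] True by simp
    moreover have "ks ! c \<noteq> x"
      using fresh keys_after unfolding flat by auto
    ultimately show ?thesis
      using sorted_parts(2) unfolding keys_after by fastforce
  qed
  then show "\<forall>k\<in>set (item_keys (flatten_after ts ks (cidx ks x))). x < k"
    by (simp add: c_def)
qed

lemma flatten_before_counts:
  assumes len: "length ts = Suc (length ks)" and wf: "\<forall>t\<in>set ts. wf_btree t" and c: "c < length ts"
  shows "length (item_leaves (flatten_before ts ks c)) = (\<Sum>t\<leftarrow>take c ts. nleaves t)"
    and "length (item_seps (flatten_before ts ks c)) = (\<Sum>t\<leftarrow>take c ts. nleaves t)"
proof -
  have shape: "length (take c ks) \<le> length (take c ts)" "length (take c ts) \<le> Suc (length (take c ks))"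
    using len c by auto
  have wf_take: "\<And>t. t \<in> set (take c ts) \<Longrightarrow> wf_btree t"
    using wf by (auto dest: in_set_takeD)
  show "length (item_leaves (flatten_before ts ks c)) = (\<Sum>t\<leftarrow>take c ts. nleaves t)"
    unfolding flatten_before_def flatten_list_shape(1)[OF shape]
    using wf_take length_btree_leaves by (simp add: length_concat comp_def cong: map_cong)
  have "(\<Sum>t\<leftarrow>take c ts. nleaves t) = (\<Sum>t\<leftarrow>take c ts. Suc (length (btree_seps t)))"
    using wf_take length_btree_leaves by (metis (no_types, lifting) map_cong)
  also have "\<dots> = (\<Sum>t\<leftarrow>take c ts. length (btree_seps t)) + length (take c ts)"
    by (rule sum_list_Suc)
  finally show "length (item_seps (flatten_before ts ks c)) = (\<Sum>t\<leftarrow>take c ts. nleaves t)"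
    unfolding flatten_before_def flatten_list_shape(2)[OF shape] using len c by simp
qed

lemma flatten_ins:
  assumes "wf_btree t" "sorted_wrt (<) (btree_keys t)" "x \<notin> set (btree_keys t)"
  shows "wf_res (ins m x t) \<and>
    (\<exists>A B. flatten t = A @ Lf (leaf_keys t x) # B \<and>
       flatten_res (ins m x t) = A @ flatten_res (leaf_res m (insort x (leaf_keys t x))) @ B \<and>
       leaf_index t x = length (item_leaves A) \<and> length (item_seps A) = length (item_leaves A) \<and>
       (\<forall>k\<in>set (item_keys A). k < x) \<and> (\<forall>k\<in>set (item_keys B). x < k))"
  using assms
proof (induction m x t rule: ins.induct)
  case (1 m x ks)
  have "wf_res (leaf_res m L)" for L
    by (simp add: leaf_res_def)
  then show ?case
    by (intro conjI exI[of _ "[]"]) auto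
next
  case (2 m x ks ts)
  define c where "c = cidx ks x"
  have len: "length ts = Suc (length ks)" and wf: "\<forall>t\<in>set ts. wf_btree t"
    using "2.prems"(1) by auto
  have c: "c < length ts"
    unfolding c_def cidx_def using len by (simp add: le_imp_less_Suc)
  have flat: "flatten (Node ks ts) = flatten_before ts ks c @ flatten (ts ! c) @ flatten_after ts ks c"
    using flatten_list_update[OF len c, of "ts ! c"] by simp
  have child: "wf_btree (ts ! c)" "sorted_wrt (<) (btree_keys (ts ! c))" "x \<notin> set (btree_keys (ts ! c))"
    using wf c "2.prems"(2,3) unfolding flat by (auto simp: sorted_wrt_append)
  obtain A B where AB: "flatten (ts ! c) = A @ Lf (leaf_keys (ts ! c) x) # B"
      "flatten_res (ins m x (ts ! c)) = A @ flatten_res (leaf_res m (insort x (leaf_keys (ts ! c) x))) @ B"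
      "leaf_index (ts ! c) x = length (item_leaves A)" "length (item_seps A) = length (item_leaves A)"
      "\<forall>k\<in>set (item_keys A). k < x" "\<forall>k\<in>set (item_keys B). x < k"
    and wf_child: "wf_res (ins m x (ts ! c))"
    using "2.IH"[OF c[unfolded c_def] child[unfolded c_def]] unfolding c_def by blast
  have ins: "ins m x (Node ks ts) = node_res m ks ts c (ins m x (ts ! c))"
    using c unfolding c_def by simp
  note res = flatten_res_node_res[OF len wf c wf_child, of m]
  note around = keys_around_cidx[OF len "2.prems"(2,3), folded c_def]
  note counts = flatten_before_counts[OF len wf c]
  show ?case
  proof (intro conjI exI)
    show "wf_res (ins m x (Node ks ts))"
      using res ins by simp
    show "flatten (Node ks ts) = (flatten_before ts ks c @ A) @ Lf (leaf_keys (Node ks ts) x) # (B @ flatten_after ts ks c)"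
      using flat AB(1) c unfolding c_def by simp
    show "flatten_res (ins m x (Node ks ts)) = (flatten_before ts ks c @ A) @
        flatten_res (leaf_res m (insort x (leaf_keys (Node ks ts) x))) @ (B @ flatten_after ts ks c)"
      using res ins AB(2) c unfolding c_def by simp
    show "leaf_index (Node ks ts) x = length (item_leaves (flatten_before ts ks c @ A))"
      using counts AB(3) c unfolding c_def by simp
    show "length (item_seps (flatten_before ts ks c @ A)) = length (item_leaves (flatten_before ts ks c @ A))"
      using counts AB(4) by simp
    show "\<forall>k\<in>set (item_keys (flatten_before ts ks c @ A)). k < x"
      using around(1) AB(5) by auto
    show "\<forall>k\<in>set (item_keys (B @ flatten_after ts ks c)). x < k"
      using around(2) AB(6) by auto
  qed
qed

definition search_tree :: "btree \<Rightarrow> bool" where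
  "search_tree t \<longleftrightarrow> wf_btree t \<and> sorted_wrt (<) (btree_keys t)"

lemma flatten_binsert:
  assumes "search_tree t" "x \<notin> set (btree_keys t)"
  obtains A B where "flatten t = A @ Lf (leaf_keys t x) # B"
    "flatten (binsert m x t) = A @ flatten_res (leaf_res m (insort x (leaf_keys t x))) @ B"
    "leaf_index t x = length (item_leaves A)" "length (item_seps A) = length (item_leaves A)"
    "\<forall>k\<in>set (item_keys A). k < x" "\<forall>k\<in>set (item_keys B). x < k"
    "wf_btree (binsert m x t)"
proof -
  have "flatten (binsert m x t) = flatten_res (ins m x t) \<and> wf_btree (binsert m x t)"
    if "wf_res (ins m x t)"
    using that by (cases "ins m x t") (simp_all add: binsert_def)
  then show ?thesis
    using flatten_ins[of t x m] assms that unfolding search_tree_def by metis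
qed

lemma leaf_res_items:
  "length L \<le> 2*m \<Longrightarrow> flatten_res (leaf_res m L) = [Lf L]"
  "\<not> length L \<le> 2*m \<Longrightarrow> flatten_res (leaf_res m L) = [Lf (take m L), Sep (L ! m), Lf (drop (Suc m) L)]"
  by (simp_all add: leaf_res_def)

lemma item_keys_leaf_res: "item_keys (flatten_res (leaf_res m L)) = L"
  by (cases "length L \<le> 2*m") (simp_all add: leaf_res_items id_take_nth_drop[symmetric])

lemma search_tree_binsert:
  assumes "search_tree t" "x \<notin> set (btree_keys t)"
  shows "search_tree (binsert m x t)"
    and "set (btree_keys (binsert m x t)) = insert x (set (btree_keys t))"
proof -
  obtain A B where AB: "flatten t = A @ Lf (leaf_keys t x) # B"
    "flatten (binsert m x t) = A @ flatten_res (leaf_res m (insort x (leaf_keys t x))) @ B"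
    "\<forall>k\<in>set (item_keys A). k < x" "\<forall>k\<in>set (item_keys B). x < k" "wf_btree (binsert m x t)"
    using flatten_binsert[OF assms] by metis
  have keys: "btree_keys (binsert m x t) = item_keys A @ insort x (leaf_keys t x) @ item_keys B"
    using AB(2) by (simp add: item_keys_leaf_res)
  have sorted: "sorted_wrt (<) (item_keys A @ leaf_keys t x @ item_keys B)"
    using assms(1) AB(1) by (simp add: search_tree_def)
  moreover have "x \<notin> set (leaf_keys t x)"
    using assms(2) AB(1) by simp
  ultimately have "sorted_wrt (<) (insort x (leaf_keys t x))"
    by (simp add: sorted_wrt_append strict_sorted_iff sorted_insort distinct_insort)
  then show "search_tree (binsert m x t)"
    unfolding search_tree_def keys using AB(3,4,5) sorted
    by (auto simp: sorted_wrt_append set_insort_key)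
  show "set (btree_keys (binsert m x t)) = insert x (set (btree_keys t))"
    unfolding keys AB(1) by (auto simp: set_insort_key)
qed

lemma btree_leaves_binsert:
  assumes "search_tree t" "x \<notin> set (btree_keys t)"
  defines "e \<equiv> leaf_index t x"
  shows "e < length (btree_leaves t)" and "btree_leaves t ! e = leaf_keys t x"
    and "btree_leaves (binsert m x t) = take e (btree_leaves t) @
           item_leaves (flatten_res (leaf_res m (insort x (leaf_keys t x)))) @ drop (Suc e) (btree_leaves t)"
proof -
  obtain A B where AB: "flatten t = A @ Lf (leaf_keys t x) # B"
    "flatten (binsert m x t) = A @ flatten_res (leaf_res m (insort x (leaf_keys t x))) @ B"
    "e = length (item_leaves A)"
    using flatten_binsert[OF assms(1,2)] unfolding e_def by metis
  then show "e < length (btree_leaves t)" "btree_leaves t ! e = leaf_keys t x"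
    and "btree_leaves (binsert m x t) = take e (btree_leaves t) @
           item_leaves (flatten_res (leaf_res m (insort x (leaf_keys t x)))) @ drop (Suc e) (btree_leaves t)"
    by simp_all
qed

lemma btree_seps_binsert:
  assumes "search_tree t" "x \<notin> set (btree_keys t)"
  defines "L \<equiv> insort x (leaf_keys t x)" and "S \<equiv> btree_seps t" and "e \<equiv> leaf_index t x"
  shows "btree_seps (binsert m x t) = take e S @ (if length L \<le> 2*m then [] else [L ! m]) @ drop e S"
    and "y \<in> set L \<Longrightarrow> y \<notin> set S \<and> length (filter (\<lambda>s. s < y) S) = e"
proof -
  obtain A B where AB: "flatten t = A @ Lf (leaf_keys t x) # B"
    "flatten (binsert m x t) = A @ flatten_res (leaf_res m L) @ B"
    "e = length (item_seps A)"
    "\<forall>k\<in>set (item_keys A). k < x" "\<forall>k\<in>set (item_keys B). x < k"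
    using flatten_binsert[OF assms(1,2)] unfolding e_def L_def by metis
  have S: "S = item_seps A @ item_seps B"
    unfolding S_def AB(1) by simp
  show "btree_seps (binsert m x t) = take e S @ (if length L \<le> 2*m then [] else [L ! m]) @ drop e S"
    unfolding AB(2) S AB(3) by (cases "length L \<le> 2*m") (simp_all add: leaf_res_items)
  assume y: "y \<in> set L"
  have "(\<forall>k\<in>set (item_keys A). k < y) \<and> (\<forall>k\<in>set (item_keys B). y < k)"
  proof (cases "y = x")
    case True
    then show ?thesis using AB(4,5) by simp
  next
    case False
    then have "y \<in> set (leaf_keys t x)"
      using y unfolding L_def by (simp add: set_insort_key)
    then show ?thesis
      using assms(1) AB(1) by (auto simp: search_tree_def sorted_wrt_append)
  qed
  then have "\<forall>k\<in>set (item_seps A). k < y" "\<forall>k\<in>set (item_seps B). y < k"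
    using set_item_seps_subset by blast+
  then show "y \<notin> set S \<and> length (filter (\<lambda>s. s < y) S) = e"
    unfolding S AB(3) by (auto simp: filter_empty_conv)
qed

section \<open>External vertices of historic trees\<close>

fun ext_paths :: "htree \<Rightarrow> nat list list"
  and ext_paths_from :: "nat \<Rightarrow> htree list \<Rightarrow> nat list list" where
  "ext_paths Ext = [[]]"
| "ext_paths (HV l ts) = ext_paths_from 0 ts"
| "ext_paths_from c [] = []"
| "ext_paths_from c (t # ts) = map ((#) c) (ext_paths t) @ ext_paths_from (Suc c) ts"

lemma length_ext_paths: "length (ext_paths t) = nexts t"
  and length_ext_paths_from: "length (ext_paths_from c ts) = (\<Sum>t\<leftarrow>ts. nexts t)"
  by (induction t and c ts rule: ext_paths_ext_paths_from.induct) auto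

lemma ext_paths_from_Cons:
  "r \<in> set (ext_paths_from c ts) \<Longrightarrow>
   \<exists>a r'. r = a # r' \<and> c \<le> a \<and> a < c + length ts \<and> r' \<in> set (ext_paths (ts ! (a - c)))"
proof (induction ts arbitrary: c)
  case Nil
  then show ?case by simp
next
  case (Cons t ts)
  show ?case
  proof (cases "r \<in> set (map ((#) c) (ext_paths t))")
    case True
    then show ?thesis by auto
  next
    case False
    then have "r \<in> set (ext_paths_from (Suc c) ts)"
      using Cons.prems by simp
    then obtain a r' where "r = a # r'" "Suc c \<le> a" "a < Suc c + length ts"
      "r' \<in> set (ext_paths (ts ! (a - Suc c)))"
      using Cons.IH by blast
    then show ?thesis
      by (intro exI[of _ a] exI[of _ r']) (auto simp: nth_Cons' Suc_diff_Suc)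
  qed
qed

fun path_left :: "nat list \<Rightarrow> nat list \<Rightarrow> bool" where
  "path_left (a # r) (b # s) = (a < b \<or> (a = b \<and> path_left r s))"
| "path_left _ _ = False"

lemma path_left_trans: "path_left r s \<Longrightarrow> path_left s u \<Longrightarrow> path_left r u"
proof (induction r arbitrary: s u)
  case (Cons a r)
  then show ?case by (cases s; cases u) auto
qed simp

lemma path_left_irrefl: "\<not> path_left r r"
  by (induction r) auto

lemma path_left_append: "path_left r s \<Longrightarrow> path_left (r @ u) (s @ v)"
proof (induction r arbitrary: s)
  case (Cons a r)
  then show ?case by (cases s) auto
qed simp

lemma path_left_append_same: "path_left (p @ r) (p @ s) = path_left r s"
  by (induction p) auto

lemma path_left_snoc: "\<not> prefix r s \<Longrightarrow> path_left (r @ [c]) (s @ [d]) = path_left r (s @ [d])"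
proof (induction r arbitrary: s)
  case Nil
  then show ?case by simp
next
  case (Cons a r)
  then show ?case by (cases s) auto
qed

lemma binary_right_iff_not_path_left:
  "set p \<subseteq> {0, 1} \<Longrightarrow> set q \<subseteq> {0, 1} \<Longrightarrow> \<not> prefix q p \<Longrightarrow>
   (prefix (p @ [1]) q \<or> (\<not> prefix p q \<and> prefix (common_prefix p q @ [1]) q)) \<longleftrightarrow>
   \<not> path_left q (p @ [1])"
proof (induction p arbitrary: q)
  case Nil
  then show ?case by (cases q) auto
next
  case (Cons a p)
  then show ?case by (cases q) auto
qed

lemma sorted_ext_paths: "sorted_wrt path_left (ext_paths t)"
  and "sorted_wrt path_left (ext_paths_from c ts)"
proof (induction t and c ts rule: ext_paths_ext_paths_from.induct)
  case (4 c t ts)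
  have "\<forall>r\<in>set (map ((#) c) (ext_paths t)). \<forall>s\<in>set (ext_paths_from (Suc c) ts). path_left r s"
    using ext_paths_from_Cons[of _ "Suc c" ts] by fastforce
  then show ?case
    using 4 by (simp add: sorted_wrt_append sorted_wrt_map)
qed auto

lemma subt_Ext [simp]: "subt Ext q = Ext"
  by (cases q) auto

lemma subt_append: "subt t (r @ s) = subt (subt t r) s"
  by (induction t r rule: subt.induct) auto

lemma vertex_at_simps [simp]:
  "\<not> vertex_at Ext q l"
  "vertex_at (HV l ts) [] l' \<longleftrightarrow> l' = l"
  "vertex_at (HV l ts) (c # q) l' \<longleftrightarrow> c < length ts \<and> vertex_at (ts ! c) q l'"
  by (cases q) (auto simp: vertex_at_def)

lemma subt_ext_path: "r \<in> set (ext_paths t) \<Longrightarrow> subt t r = Ext"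
  by (induction t arbitrary: r) (fastforce dest: ext_paths_from_Cons)+

lemma ext_path_not_prefix:
  assumes "vertex_at t p l" "r \<in> set (ext_paths t)"
  shows "\<not> prefix r p"
proof
  assume "prefix r p"
  then obtain s where "p = r @ s"
    by (auto simp: prefix_def)
  then have "subt t p = Ext"
    using subt_ext_path[OF assms(2)] by (simp add: subt_append)
  then show False
    using assms(1) by (simp add: vertex_at_def)
qed

lemma ext_paths_from_replicate: "ext_paths_from c (replicate k Ext) = map (\<lambda>c'. [c']) [c..<c+k]"
  by (induction k arbitrary: c) (simp_all add: upt_rec)

text \<open>In \<open>place_list m h ts\<close> the trees \<open>ts\<close> have their roots at height \<open>h\<close>, while the paths of
  \<open>ext_paths_from c ts\<close> start with the slot index; hence the \<open>- 1\<close> in the height.\<close>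

lemma ext_paths_place:
  "e < nexts t \<Longrightarrow> ext_paths (place m h t e l) =
     take e (ext_paths t) @ map (\<lambda>c. ext_paths t ! e @ [c]) [0..<arity m (h + length (ext_paths t ! e))] @
     drop (Suc e) (ext_paths t)"
  and "e < (\<Sum>t\<leftarrow>ts. nexts t) \<Longrightarrow> 0 < h \<Longrightarrow> \<forall>c. ext_paths_from c (place_list m h ts e l) =
     take e (ext_paths_from c ts) @
     map (\<lambda>c'. ext_paths_from c ts ! e @ [c']) [0..<arity m (h + length (ext_paths_from c ts ! e) - 1)] @
     drop (Suc e) (ext_paths_from c ts)"
proof (induction m h t e l and m h ts e l rule: place_place_list.induct)
  case (1 m h i l)
  then show ?case by (simp add: ext_paths_from_replicate)
next
  case (4 m h t ts i l)
  show ?case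
  proof
    fix c
    show "ext_paths_from c (place_list m h (t # ts) i l) =
      take i (ext_paths_from c (t # ts)) @
      map (\<lambda>c'. ext_paths_from c (t # ts) ! i @ [c'])
        [0..<arity m (h + length (ext_paths_from c (t # ts) ! i) - 1)] @
      drop (Suc i) (ext_paths_from c (t # ts))"
    proof (cases "i < nexts t")
      case True
      then show ?thesis
        using "4.IH"(1)[OF True True] "4.prems"(2)
        by (simp add: length_ext_paths take_append drop_append nth_append take_map drop_map)
    next
      case False
      have i: "i - nexts t < length (ext_paths_from (Suc c) ts)"
        using "4.prems"(1) False by (simp add: length_ext_paths_from)
      have "ext_paths_from (Suc c) ts ! (i - nexts t) \<noteq> []"
        using ext_paths_from_Cons[OF nth_mem[OF i]] by auto
      then show ?thesis
        using False "4.IH"(2)[OF False _ "4.prems"(2)] "4.prems"(1)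
        by (simp add: length_ext_paths take_append drop_append nth_append Suc_diff_le not_less)
    qed
  qed
qed simp_all

lemma length_place_list [simp]: "length (place_list m h ts e l) = length ts"
  by (induction ts arbitrary: e) auto

lemma vertex_at_place:
  "e < nexts t \<Longrightarrow>
     vertex_at (place m h t e l) q l' \<longleftrightarrow> (q = ext_paths t ! e \<and> l' = l) \<or> vertex_at t q l'"
  and "e < (\<Sum>t\<leftarrow>ts. nexts t) \<Longrightarrow> \<forall>c c' q. c' < length ts \<longrightarrow>
     (vertex_at (place_list m h ts e l ! c') q l' \<longleftrightarrow>
       ((c + c') # q = ext_paths_from c ts ! e \<and> l' = l) \<or> vertex_at (ts ! c') q l')"
proof (induction m h t e l and m h ts e l arbitrary: q and rule: place_place_list.induct)
  case (1 m h i l)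
  then show ?case by (cases q) auto
next
  case (2 m h l'' ts i l)
  have i_sum: "i < (\<Sum>t\<leftarrow>ts. nexts t)"
    using "2.prems" by simp
  then have i: "i < length (ext_paths_from 0 ts)"
    by (simp add: length_ext_paths_from)
  obtain a r' where ar: "ext_paths_from 0 ts ! i = a # r'" "a < length ts"
    using ext_paths_from_Cons[OF nth_mem[OF i]] by auto
  show ?case
  proof (cases q)
    case Nil
    then show ?thesis using ar by simp
  next
    case (Cons c q')
    then show ?thesis
      using "2.IH"[OF i_sum, rule_format, of c q' 0] ar by auto
  qed
next
  case (4 m h t ts i l)
  show ?case
  proof (intro allI impI)
    fix c c' q
    assume c': "c' < length (t # ts)"
    show "vertex_at (place_list m h (t # ts) i l ! c') q l' \<longleftrightarrow>
        ((c + c') # q = ext_paths_from c (t # ts) ! i \<and> l' = l) \<or> vertex_at ((t # ts) ! c') q l'"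
    proof (cases "i < nexts t")
      case True
      have "ext_paths_from c (t # ts) ! i = c # ext_paths t ! i"
        using True by (simp add: length_ext_paths nth_append)
      then show ?thesis
        using True "4.IH"(1)[OF True True] by (cases c') auto
    next
      case False
      have i: "i - nexts t < length (ext_paths_from (Suc c) ts)"
        using "4.prems" False by (simp add: length_ext_paths_from)
      have nth: "ext_paths_from c (t # ts) ! i = ext_paths_from (Suc c) ts ! (i - nexts t)"
        using False by (simp add: length_ext_paths nth_append)
      obtain a r' where ar: "ext_paths_from (Suc c) ts ! (i - nexts t) = a # r'" "Suc c \<le> a"
        using ext_paths_from_Cons[OF nth_mem[OF i]] by auto
      show ?thesis
      proof (cases c')
        case 0
        then show ?thesis using False nth ar by auto
      next
        case (Suc k)
        then show ?thesis
          using "4.IH"(2)[OF False, rule_format, where c = "Suc c" and c' = k and q = q] "4.prems" False nth c' by simp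
      qed
    qed
  qed
qed simp

section \<open>Leaf sizes and counting arguments\<close>

text \<open>The leaf below an external vertex at height \<open>h\<close> holds \<open>leaf_size m h\<close> keys: it gains one
  key per level, is full at a branching height, and then splits into two leaves of \<open>m\<close> keys.\<close>

definition leaf_size :: "nat \<Rightarrow> nat \<Rightarrow> nat" where
  "leaf_size m h = (if h \<le> 2*m then h else m + (h - 2*m - 1) mod (m+1))"

lemma leaf_size_le: "leaf_size m h \<le> 2*m"
proof -
  have "(h - 2*m - 1) mod (m+1) \<le> m"
    using mod_less_divisor[of "m+1" "h - 2*m - 1"] by simp
  then show ?thesis
    unfolding leaf_size_def by auto
qed

lemma leaf_size_full_iff: "1 \<le> m \<Longrightarrow> leaf_size m h = 2*m \<longleftrightarrow> branching_height m h"
  and leaf_size_Suc: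
    "1 \<le> m \<Longrightarrow> leaf_size m (Suc h) = (if branching_height m h then m else Suc (leaf_size m h))"
proof -
  assume m: "1 \<le> m"
  have "h < 2*m \<or> h = 2*m \<or> h = 2*m + 1 + (h - 2*m - 1)"
    by linarith
  then consider "h < 2*m" | "h = 2*m" | d where "h = 2*m + 1 + d"
    by blast
  then have "(leaf_size m h = 2*m \<longleftrightarrow> branching_height m h) \<and>
      leaf_size m (Suc h) = (if branching_height m h then m else Suc (leaf_size m h))"
  proof cases
    case 1
    then have "\<not> branching_height m h" "leaf_size m h = h" "leaf_size m (Suc h) = Suc h"
      by (auto simp: branching_height_def leaf_size_def)
    then show ?thesis
      using 1 by simp
  next
    case 2
    then show ?thesis by (simp add: branching_height_def leaf_size_def)
  next
    case 3
    define r where "r = d mod (m+1)"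
    have r: "r \<le> m"
      unfolding r_def using mod_less_divisor[of "m+1" d] by simp
    have Suc_d: "Suc d mod (m+1) = (if r = m then 0 else Suc r)"
      unfolding r_def using mod_Suc[of d "m+1"] by simp
    have "h - 2*m = Suc d" "h - 2*m - 1 = d" "Suc h - 2*m - 1 = Suc d"
      using 3 by simp_all
    then have "(branching_height m h \<longleftrightarrow> r = m) \<and>
      leaf_size m h = m + r \<and> leaf_size m (Suc h) = m + (if r = m then 0 else Suc r)"
      unfolding branching_height_def leaf_size_def r_def using 3 Suc_d[unfolded r_def] by auto
    then show ?thesis
      using r m by auto
  qed
  then show "leaf_size m h = 2*m \<longleftrightarrow> branching_height m h"
    and "leaf_size m (Suc h) = (if branching_height m h then m else Suc (leaf_size m h))"
    by blast+
qed

lemma insort_fits_iff: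
  "1 \<le> m \<Longrightarrow> length ks = leaf_size m h \<Longrightarrow> length (insort x ks) \<le> 2*m \<longleftrightarrow> \<not> branching_height m h"
  using leaf_size_full_iff[of m h] leaf_size_le[of m h] by (auto simp: length_insort)

lemma leaf_sizes_leaf_res:
  assumes m: "1 \<le> m" and ks: "length ks = leaf_size m (length p)"
  shows "map length (item_leaves (flatten_res (leaf_res m (insort x ks)))) =
         map (\<lambda>c. leaf_size m (length (p @ [c]))) [0..<arity m (length p)]"
proof (cases "branching_height m (length p)")
  case True
  then have "\<not> length (insort x ks) \<le> 2*m" "length (insort x ks) = Suc (2*m)"
    using insort_fits_iff[OF m ks] leaf_size_full_iff[OF m] ks by (auto simp: length_insort)
  then show ?thesis
    using True leaf_size_Suc[OF m] by (simp add: leaf_res_items arity_def upt_rec)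
next
  case False
  then have "length (insort x ks) \<le> 2*m"
    using insort_fits_iff[OF m ks] by simp
  then show ?thesis
    using False leaf_size_Suc[OF m] ks by (simp add: leaf_res_items arity_def length_insort)
qed

lemma less_iff_length_filter_less:
  fixes y K :: nat
  assumes "y \<notin> set S" "K \<in> set S"
  shows "y < K \<longleftrightarrow> length (filter (\<lambda>s. s < y) S) < length (filter (\<lambda>s. s \<le> K) S)"
proof
  assume "y < K"
  then have "filter (\<lambda>s. s < y) S = filter (\<lambda>s. s < y) (filter (\<lambda>s. s \<le> K) S)"
    by (auto simp: filter_filter intro: filter_cong)
  moreover have "length (filter (\<lambda>s. s < y) (filter (\<lambda>s. s \<le> K) S)) < length (filter (\<lambda>s. s \<le> K) S)"
    using \<open>y < K\<close> assms(2) by (intro length_filter_less[of K]) auto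
  ultimately show "length (filter (\<lambda>s. s < y) S) < length (filter (\<lambda>s. s \<le> K) S)"
    by simp
next
  assume less: "length (filter (\<lambda>s. s < y) S) < length (filter (\<lambda>s. s \<le> K) S)"
  show "y < K"
  proof (rule ccontr)
    assume "\<not> y < K"
    then have "K < y"
      using assms by (metis linorder_neqE_nat)
    then have "filter (\<lambda>s. s \<le> K) S = filter (\<lambda>s. s \<le> K) (filter (\<lambda>s. s < y) S)"
      by (auto simp: filter_filter intro: filter_cong)
    then show False
      using less length_filter_le[of "\<lambda>s. s \<le> K" "filter (\<lambda>s. s < y) S"] by simp
  qed
qed

lemma length_filter_split_nth:
  "e < length xs \<Longrightarrow> length (filter Q xs) =
     length (filter Q (take e xs)) + (if Q (xs ! e) then 1 else 0) + length (filter Q (drop (Suc e) xs))"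
  by (subst id_take_nth_drop[of e xs]) simp_all

lemma separator_count_step:
  fixes S :: "nat list" and P :: "nat list list"
  assumes sorted: "sorted_wrt R P" and down: "\<And>a b. R a b \<Longrightarrow> Q b \<Longrightarrow> Q a"
    and e: "e < length P" and snoc: "\<And>c. Q (P ! e @ [c]) = Q (P ! e)"
    and K: "K \<in> set S"
    and y: "\<not> fits \<Longrightarrow> y \<notin> set S" "\<not> fits \<Longrightarrow> length (filter (\<lambda>s. s < y) S) = e"
    and count: "length (filter (\<lambda>s. s \<le> K) S) = length (filter Q P)"
  shows "length (filter (\<lambda>s. s \<le> K) (take e S @ (if fits then [] else [y]) @ drop e S)) =
         length (filter Q (take e P @ map (\<lambda>c. P ! e @ [c]) [0..<if fits then 1 else 2] @ drop (Suc e) P))"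
proof -
  have S: "length (filter (\<lambda>s. s \<le> K) S) =
      length (filter (\<lambda>s. s \<le> K) (take e S)) + length (filter (\<lambda>s. s \<le> K) (drop e S))"
    by (metis append_take_drop_id filter_append length_append)
  note P = length_filter_split_nth[OF e, of Q]
  show ?thesis
  proof (cases fits)
    case True
    then show ?thesis
      using S P count snoc by (simp split: if_splits)
  next
    case False
    have "y \<le> K \<longleftrightarrow> y < K"
      using y(1)[OF False] K by (auto simp: order_le_less)
    also have "\<dots> \<longleftrightarrow> e < length (filter Q P)"
      using less_iff_length_filter_less[OF y(1)[OF False] K] y(2)[OF False] count by simp
    also have "\<dots> \<longleftrightarrow> Q (P ! e)"
      using sorted_wrt_nth_iff_less_length_filter[of R P Q, OF sorted down e] by simp
    finally show ?thesis
      using False S P count snoc by (simp add: upt_rec split: if_splits)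
  qed
qed

lemma separator_count_new:
  fixes K :: nat
  assumes "K \<notin> set S" "length (filter (\<lambda>s. s < K) S) = e"
  shows "length (filter (\<lambda>s. s \<le> K) (take e S @ [K] @ drop e S)) = Suc e"
proof -
  have "filter (\<lambda>s. s \<le> K) S = filter (\<lambda>s. s < K) S"
    using assms(1) by (intro filter_cong) (auto simp: order_le_less)
  then have "length (filter (\<lambda>s. s \<le> K) (take e S) @ filter (\<lambda>s. s \<le> K) (drop e S)) = e"
    using assms(2) by (simp flip: filter_append)
  then show ?thesis by simp
qed

lemma path_count_new:
  assumes "sorted_wrt path_left P" "e < length P"
  shows "length (filter (\<lambda>r. path_left r (P ! e @ [1]))
           (take e P @ map (\<lambda>c. P ! e @ [c]) [0..<2] @ drop (Suc e) P)) = Suc e"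
proof -
  have "sorted_wrt path_left (take e P @ P ! e # drop (Suc e) P)"
    using assms by (simp add: id_take_nth_drop[symmetric])
  then have before: "\<And>r. r \<in> set (take e P) \<Longrightarrow> path_left r (P ! e)"
    and after: "\<And>r. r \<in> set (drop (Suc e) P) \<Longrightarrow> path_left (P ! e) r"
    by (simp_all add: sorted_wrt_append)
  have "filter (\<lambda>r. path_left r (P ! e @ [1])) (take e P) = take e P"
    using path_left_append[OF before, of _ "[]" "[1]"] by (simp add: filter_id_conv)
  moreover have "\<not> path_left r (P ! e @ [1])" if "r \<in> set (drop (Suc e) P)" for r
    using path_left_append[OF after[OF that], of "[1]" "[]"] path_left_trans path_left_irrefl by fastforce
  then have "filter (\<lambda>r. path_left r (P ! e @ [1])) (drop (Suc e) P) = []"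
    by (simp add: filter_empty_conv)
  ultimately show ?thesis
    using assms(2) by (simp add: upt_rec path_left_append_same path_left_irrefl)
qed

section \<open>The insertion history\<close>

locale insertion_history =
  fixes m n :: nat and \<pi> :: "nat \<Rightarrow> nat"
  assumes m_pos: "1 \<le> m" and inj: "inj_on \<pi> {1..n}"
begin

abbreviation T :: "nat \<Rightarrow> btree" where
  "T t \<equiv> btree_hist m \<pi> t"

abbreviation H :: "nat \<Rightarrow> htree" where
  "H t \<equiv> hist m \<pi> t"

definition pos :: "nat \<Rightarrow> nat" where
  "pos t = leaf_index (T t) (\<pi> (Suc t))"

definition new_leaf :: "nat \<Rightarrow> nat list" where
  "new_leaf t = insort (\<pi> (Suc t)) (leaf_keys (T t) (\<pi> (Suc t)))"

text \<open>Behind the third conjunct is the correspondence underlying \<open>hist\<close>: the \<open>k\<close>-th leaf of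
  \<open>T t\<close> sits at the \<open>k\<close>-th external vertex of \<open>H t\<close>, whose height determines its size.\<close>

definition invariant :: "nat \<Rightarrow> bool" where
  "invariant t \<longleftrightarrow> search_tree (T t) \<and> set (btree_keys (T t)) = \<pi> ` {1..t} \<and>
     map length (btree_leaves (T t)) = map (\<lambda>r. leaf_size m (length r)) (ext_paths (H t)) \<and>
     (\<forall>r\<in>set (ext_paths (H t)). set r \<subseteq> {0, 1})"

lemma fresh_key:
  assumes "t < n"
  shows "\<pi> (Suc t) \<notin> \<pi> ` {1..t}"
proof
  assume "\<pi> (Suc t) \<in> \<pi> ` {1..t}"
  then obtain y where y: "y \<in> {1..t}" "\<pi> y = \<pi> (Suc t)"
    by (metis imageE)
  then have "y = Suc t"
    using inj_onD[OF inj] assms by simp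
  then show False
    using y(1) by simp
qed

lemma H_Suc: "H (Suc t) = place m 0 (H t) (pos t) (Suc t)"
  by (simp add: pos_def)

lemma invariant_pos:
  assumes inv: "invariant t" and fresh: "\<pi> (Suc t) \<notin> \<pi> ` {1..t}"
  shows "pos t < length (ext_paths (H t))"
    and "length (leaf_keys (T t) (\<pi> (Suc t))) = leaf_size m (length (ext_paths (H t) ! pos t))"
proof -
  have st: "search_tree (T t)" and x: "\<pi> (Suc t) \<notin> set (btree_keys (T t))"
    and sizes: "map length (btree_leaves (T t)) = map (\<lambda>r. leaf_size m (length r)) (ext_paths (H t))"
    using inv fresh by (simp_all add: invariant_def)
  note leaves = btree_leaves_binsert[OF st x, folded pos_def]
  show "pos t < length (ext_paths (H t))"
    using leaves(1) arg_cong[OF sizes, of length] by simp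
  then show "length (leaf_keys (T t) (\<pi> (Suc t))) = leaf_size m (length (ext_paths (H t) ! pos t))"
    using leaves(1,2) arg_cong[OF sizes, of "\<lambda>xs. xs ! pos t"] by simp
qed

lemma ext_paths_H_Suc:
  assumes "pos t < length (ext_paths (H t))"
  shows "ext_paths (H (Suc t)) = take (pos t) (ext_paths (H t)) @
           map (\<lambda>c. ext_paths (H t) ! pos t @ [c]) [0..<arity m (length (ext_paths (H t) ! pos t))] @
           drop (Suc (pos t)) (ext_paths (H t))"
  unfolding H_Suc using ext_paths_place(1)[of "pos t" "H t" m 0 "Suc t"] assms
  by (simp add: length_ext_paths)

lemma invariant_Suc:
  assumes inv: "invariant t" and fresh: "\<pi> (Suc t) \<notin> \<pi> ` {1..t}"
  shows "invariant (Suc t)"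
proof -
  define x where "x = \<pi> (Suc t)"
  define P where "P = ext_paths (H t)"
  define e where "e = pos t"
  have st: "search_tree (T t)" and keys: "set (btree_keys (T t)) = \<pi> ` {1..t}"
    and sizes: "map length (btree_leaves (T t)) = map (\<lambda>r. leaf_size m (length r)) P"
    and binary: "\<forall>r\<in>set P. set r \<subseteq> {0, 1}"
    using inv unfolding invariant_def P_def by simp_all
  have x: "x \<notin> set (btree_keys (T t))"
    using fresh keys unfolding x_def by simp
  have T_Suc: "T (Suc t) = binsert m x (T t)"
    unfolding x_def by simp
  note pos = invariant_pos[OF inv fresh, folded P_def e_def]
  have P_Suc: "ext_paths (H (Suc t)) = take e P @ map (\<lambda>c. P ! e @ [c]) [0..<arity m (length (P ! e))] @ drop (Suc e) P"
    using ext_paths_H_Suc[OF pos(1)[unfolded P_def e_def]] unfolding P_def e_def .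
  have "map length (btree_leaves (T (Suc t))) = map (\<lambda>r. leaf_size m (length r)) (ext_paths (H (Suc t)))"
    using btree_leaves_binsert(3)[OF st x, of m, folded T_Suc] leaf_sizes_leaf_res[OF m_pos pos(2), of x]
      arg_cong[OF sizes, of "take e"] arg_cong[OF sizes, of "drop (Suc e)"]
    unfolding P_Suc e_def pos_def x_def by (simp add: take_map drop_map)
  moreover have "\<forall>r\<in>set (ext_paths (H (Suc t))). set r \<subseteq> {0, 1}"
  proof -
    have "\<forall>r\<in>set (map (\<lambda>c. P ! e @ [c]) [0..<arity m (length (P ! e))]). set r \<subseteq> {0, 1}"
      using binary nth_mem[OF pos(1)] by (auto simp: arity_def)
    moreover have "\<forall>r\<in>set (take e P) \<union> set (drop (Suc e) P). set r \<subseteq> {0, 1}"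
      using binary by (auto dest: in_set_takeD in_set_dropD)
    ultimately show ?thesis
      unfolding P_Suc set_append ball_Un by blast
  qed
  ultimately show ?thesis
    unfolding invariant_def T_Suc using search_tree_binsert[OF st x] keys
    by (simp add: x_def atLeastAtMostSuc_conv image_insert)
qed

lemma invariant: "t \<le> n \<Longrightarrow> invariant t"
proof (induction t)
  case 0
  then show ?case by (simp add: invariant_def search_tree_def leaf_size_def)
next
  case (Suc t)
  then show ?case using invariant_Suc fresh_key by simp
qed

lemma pos_less: "t < n \<Longrightarrow> pos t < length (ext_paths (H t))"
  using invariant_pos(1) invariant fresh_key by simp

lemma vertex_at_H_Suc:
  "t < n \<Longrightarrow> vertex_at (H (Suc t)) q l \<longleftrightarrow> (q = ext_paths (H t) ! pos t \<and> l = Suc t) \<or> vertex_at (H t) q l"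
  unfolding H_Suc using vertex_at_place(1) pos_less by (simp add: length_ext_paths)

lemma new_leaf_fits_iff:
  "t < n \<Longrightarrow> length (new_leaf t) \<le> 2*m \<longleftrightarrow> \<not> branching_height m (length (ext_paths (H t) ! pos t))"
  unfolding new_leaf_def
  by (rule insort_fits_iff[OF m_pos invariant_pos(2)[OF invariant fresh_key]]) simp_all

lemma search_tree_T: "t \<le> n \<Longrightarrow> search_tree (T t)"
  using invariant by (simp add: invariant_def)

lemma fresh_key_T: "t < n \<Longrightarrow> \<pi> (Suc t) \<notin> set (btree_keys (T t))"
  using invariant[of t] fresh_key by (simp add: invariant_def)

lemma btree_seps_T_Suc:
  "t < n \<Longrightarrow> btree_seps (T (Suc t)) = take (pos t) (btree_seps (T t)) @
     (if length (new_leaf t) \<le> 2*m then [] else [new_leaf t ! m]) @ drop (pos t) (btree_seps (T t))"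
  using btree_seps_binsert(1)[OF search_tree_T fresh_key_T, where m = m]
  by (simp add: pos_def new_leaf_def)

lemma new_leaf_gap:
  "t < n \<Longrightarrow> y \<in> set (new_leaf t) \<Longrightarrow>
     y \<notin> set (btree_seps (T t)) \<and> length (filter (\<lambda>s. s < y) (btree_seps (T t))) = pos t"
  using btree_seps_binsert(2)[OF search_tree_T fresh_key_T] by (simp add: pos_def new_leaf_def)

definition vertex_path :: "nat \<Rightarrow> nat list" where
  "vertex_path l = ext_paths (H (l - 1)) ! pos (l - 1)"

lemma vertex_path_Suc: "vertex_path (Suc t) = ext_paths (H t) ! pos t"
  by (simp add: vertex_path_def)

lemma vertex_at_H: "t \<le> n \<Longrightarrow> vertex_at (H t) q l \<longleftrightarrow> 1 \<le> l \<and> l \<le> t \<and> q = vertex_path l"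
proof (induction t arbitrary: q l)
  case 0
  then show ?case by simp
next
  case (Suc t)
  then have t: "t < n" by simp
  have IH: "vertex_at (H t) q' l' \<longleftrightarrow> 1 \<le> l' \<and> l' \<le> t \<and> q' = vertex_path l'" for q' l'
    using Suc.IH t by simp
  have new: "\<not> vertex_at (H t) (vertex_path (Suc t)) l'" for l'
    using subt_ext_path[OF nth_mem[OF pos_less[OF t]]] by (simp add: vertex_path_Suc vertex_at_def)
  have step: "vertex_at (H (Suc t)) q l \<longleftrightarrow> (q = vertex_path (Suc t) \<and> l = Suc t) \<or> vertex_at (H t) q l"
    using vertex_at_H_Suc[OF t] by (simp only: vertex_path_Suc)
  show ?case
  proof (cases "q = vertex_path (Suc t)")
    case True
    then show ?thesis
      unfolding step using new IH[of q l] by (auto simp: le_Suc_eq)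
  next
    case False
    then show ?thesis
      unfolding step using IH[of q l] by (auto simp: le_Suc_eq)
  qed
qed

lemma vertex_path_mem: "1 \<le> l \<Longrightarrow> l \<le> n \<Longrightarrow> vertex_path l \<in> set (ext_paths (H (l - 1)))"
  unfolding vertex_path_def using pos_less[of "l - 1"] by simp

lemma vertex_path_binary: "1 \<le> l \<Longrightarrow> l \<le> n \<Longrightarrow> set (vertex_path l) \<subseteq> {0, 1}"
  using vertex_path_mem invariant[of "l - 1"] by (simp add: invariant_def)

lemma branching_vertex_path:
  assumes "is_branching m (H n) l"
  shows "1 \<le> l" "l \<le> n" "branching_height m (length (vertex_path l))"
  using assms vertex_at_H[of n] by (auto simp: is_branching_def)

lemma ext_paths_H_Suc_new_leaf:
  "t < n \<Longrightarrow> ext_paths (H (Suc t)) = take (pos t) (ext_paths (H t)) @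
     map (\<lambda>c. ext_paths (H t) ! pos t @ [c]) [0..<if length (new_leaf t) \<le> 2*m then 1 else 2] @
     drop (Suc (pos t)) (ext_paths (H t))"
  using ext_paths_H_Suc[OF pos_less] new_leaf_fits_iff by (simp add: arity_def del: hist.simps)

text \<open>Since leaves and external vertices correspond, this says that \<open>K\<^sub>i\<close> separates the keys in
  leaves left of the right child of \<open>i\<close> from the others.\<close>

definition median_separates :: "nat \<Rightarrow> nat \<Rightarrow> bool" where
  "median_separates i t \<longleftrightarrow> median_key m \<pi> i \<in> set (btree_seps (T t)) \<and>
     length (filter (\<lambda>s. s \<le> median_key m \<pi> i) (btree_seps (T t))) =
     length (filter (\<lambda>r. path_left r (vertex_path i @ [1])) (ext_paths (H t)))"

lemma median_separates_start:
  assumes i: "1 \<le> i" "i \<le> n" "branching_height m (length (vertex_path i))"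
  shows "median_separates i i"
proof -
  obtain t where i_eq: "i = Suc t"
    using i(1) by (cases i) auto
  then have t: "t < n"
    using i(2) by simp
  have e: "pos t < length (ext_paths (H t))"
    using pos_less[OF t] .
  have split: "\<not> length (new_leaf t) \<le> 2*m"
    using new_leaf_fits_iff[OF t] i(3) unfolding i_eq vertex_path_Suc by simp
  have K: "median_key m \<pi> (Suc t) = new_leaf t ! m"
    unfolding median_key_def new_leaf_def by simp
  have gap: "new_leaf t ! m \<notin> set (btree_seps (T t))"
    "length (filter (\<lambda>s. s < new_leaf t ! m) (btree_seps (T t))) = pos t"
    using new_leaf_gap[OF t, of "new_leaf t ! m"] split by simp_all
  show ?thesis
    using separator_count_new[OF gap] path_count_new[OF sorted_ext_paths e] split
    unfolding median_separates_def i_eq K btree_seps_T_Suc[OF t] ext_paths_H_Suc_new_leaf[OF t]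
      vertex_path_Suc
    by simp
qed

lemma median_separates_Suc:
  assumes i: "1 \<le> i" "i \<le> t" and t: "t < n" and sep: "median_separates i t"
  shows "median_separates i (Suc t)"
proof -
  define K where "K = median_key m \<pi> i"
  define S where "S = btree_seps (T t)"
  define P where "P = ext_paths (H t)"
  define e where "e = pos t"
  define fits where "fits = (length (new_leaf t) \<le> 2*m)"
  have e: "e < length P"
    using pos_less[OF t] unfolding e_def P_def .
  have sorted: "sorted_wrt path_left P"
    unfolding P_def by (rule sorted_ext_paths)
  have K_sep: "K \<in> set S"
    and count: "length (filter (\<lambda>s. s \<le> K) S) = length (filter (\<lambda>r. path_left r (vertex_path i @ [1])) P)"
    using sep unfolding median_separates_def K_def S_def P_def by simp_all
  have median_gap: "new_leaf t ! m \<notin> set S" "length (filter (\<lambda>s. s < new_leaf t ! m) S) = e" if "\<not> fits"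
    using new_leaf_gap[OF t, of "new_leaf t ! m"] that unfolding fits_def S_def e_def by simp_all
  have "vertex_at (H t) (vertex_path i) i"
    using vertex_at_H[of t] i t by simp
  then have "\<not> prefix (P ! e) (vertex_path i)"
    using ext_path_not_prefix nth_mem[OF e] unfolding P_def by blast
  then have snoc: "path_left (P ! e @ [c]) (vertex_path i @ [1]) = path_left (P ! e) (vertex_path i @ [1])" for c
    by (rule path_left_snoc)
  have "K \<in> set (take e S) \<union> set (drop e S)"
    using K_sep by (simp flip: set_append)
  then have "K \<in> set (take e S @ (if fits then [] else [new_leaf t ! m]) @ drop e S)"
    by auto
  then show ?thesis
    using separator_count_step[OF sorted path_left_trans e snoc K_sep median_gap count]
    unfolding median_separates_def btree_seps_T_Suc[OF t] ext_paths_H_Suc_new_leaf[OF t]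
    unfolding K_def[symmetric] S_def[symmetric] P_def[symmetric] e_def[symmetric] fits_def[symmetric]
    by (rule conjI)
qed

lemma median_separates:
  assumes "1 \<le> i" "branching_height m (length (vertex_path i))" "i \<le> t" "t \<le> n"
  shows "median_separates i t"
  using assms(3,4)
proof (induction t rule: dec_induct)
  case base
  then show ?case using median_separates_start assms(1,2) by simp
next
  case (step t)
  then show ?case using median_separates_Suc assms(1) by simp
qed

lemma new_leaf_vs_median:
  assumes i: "1 \<le> i" "branching_height m (length (vertex_path i))" and t: "i \<le> t" "t < n"
    and y: "y \<in> set (new_leaf t)"
  shows "y < median_key m \<pi> i \<longleftrightarrow> path_left (vertex_path (Suc t)) (vertex_path i @ [1])"
    and "y \<noteq> median_key m \<pi> i"
proof -
  define K where "K = median_key m \<pi> i"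
  define S where "S = btree_seps (T t)"
  define P where "P = ext_paths (H t)"
  have K: "K \<in> set S"
    and count: "length (filter (\<lambda>s. s \<le> K) S) = length (filter (\<lambda>r. path_left r (vertex_path i @ [1])) P)"
    using median_separates[OF i t(1)] t(2) unfolding median_separates_def K_def S_def P_def by simp_all
  have gap: "y \<notin> set S" "length (filter (\<lambda>s. s < y) S) = pos t"
    using new_leaf_gap[OF t(2) y] unfolding S_def by simp_all
  have "y < K \<longleftrightarrow> pos t < length (filter (\<lambda>r. path_left r (vertex_path i @ [1])) P)"
    using less_iff_length_filter_less[OF gap(1) K] gap(2) count by simp
  also have "\<dots> \<longleftrightarrow> path_left (vertex_path (Suc t)) (vertex_path i @ [1])"
    using sorted_wrt_nth_iff_less_length_filter[OF sorted_ext_paths _ pos_less[OF t(2)], of "\<lambda>r. path_left r (vertex_path i @ [1])"]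
      path_left_trans unfolding P_def vertex_path_Suc by blast
  finally show "y < median_key m \<pi> i \<longleftrightarrow> path_left (vertex_path (Suc t)) (vertex_path i @ [1])"
    unfolding K_def .
  show "y \<noteq> median_key m \<pi> i"
    using gap(1) K unfolding K_def by auto
qed

lemma right_of_iff:
  assumes "1 \<le> i" "i < j" "j \<le> n"
  shows "right_of (H n) i j \<longleftrightarrow> \<not> path_left (vertex_path j) (vertex_path i @ [1])"
proof -
  have "vertex_at (H (j - 1)) (vertex_path i) i"
    using vertex_at_H[of "j - 1"] assms by simp
  then have not_prefix: "\<not> prefix (vertex_path j) (vertex_path i)"
    using ext_path_not_prefix vertex_path_mem[of j] assms by simp
  have "right_of (H n) i j \<longleftrightarrow>
      prefix (vertex_path i @ [1]) (vertex_path j) \<or>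
      \<not> prefix (vertex_path i) (vertex_path j) \<and> prefix (common_prefix (vertex_path i) (vertex_path j) @ [1]) (vertex_path j)"
    unfolding right_of_def using vertex_at_H[of n] assms by auto
  also have "\<dots> \<longleftrightarrow> \<not> path_left (vertex_path j) (vertex_path i @ [1])"
    using binary_right_iff_not_path_left[OF vertex_path_binary vertex_path_binary not_prefix] assms by simp
  finally show ?thesis .
qed

lemma median_key_mem_new_leaf:
  assumes "is_branching m (H n) j"
  shows "median_key m \<pi> j \<in> set (new_leaf (j - 1))"
proof -
  have j: "1 \<le> j" "j \<le> n" "branching_height m (length (vertex_path j))"
    using branching_vertex_path[OF assms] by simp_all
  then have "\<not> length (new_leaf (j - 1)) \<le> 2*m"
    using new_leaf_fits_iff[of "j - 1"] vertex_path_def by simp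
  then show ?thesis
    using j(1) by (simp add: median_key_def new_leaf_def)
qed

end

theorem lemma3p2:
  fixes m n i j :: nat and \<pi> :: "nat \<Rightarrow> nat"
  assumes "m \<ge> 1"
    and "bij_betw \<pi> {1..n} {1..n}"
    and "1 \<le> i" "i < j" "j \<le> n"
    and "is_branching m (hist m \<pi> n) i"
  shows "(right_of (hist m \<pi> n) i j \<longrightarrow> \<pi> j > median_key m \<pi> i)
       \<and> (\<not> right_of (hist m \<pi> n) i j \<longrightarrow> \<pi> j < median_key m \<pi> i)
       \<and> (is_branching m (hist m \<pi> n) j \<longrightarrow>
            (right_of (hist m \<pi> n) i j \<longrightarrow> median_key m \<pi> j > median_key m \<pi> i)
          \<and> (\<not> right_of (hist m \<pi> n) i j \<longrightarrow> median_key m \<pi> j < median_key m \<pi> i))"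
proof -
  interpret insertion_history m n \<pi>
    using assms(1) bij_betw_imp_inj_on[OF assms(2)] by unfold_locales
  define t where "t = j - 1"
  have t: "i \<le> t" "t < n" "Suc t = j"
    using assms(4,5) unfolding t_def by auto
  have i: "branching_height m (length (vertex_path i))"
    using branching_vertex_path(3)[OF assms(6)] .
  have "\<pi> j \<in> set (new_leaf t)"
    using t(3) by (auto simp: new_leaf_def set_insort_key)
  note key_vs_median = new_leaf_vs_median[OF assms(3) i t(1,2) this, unfolded t(3)]
  have "median_key m \<pi> j \<in> set (new_leaf t)" if "is_branching m (hist m \<pi> n) j"
    using median_key_mem_new_leaf[OF that] unfolding t_def .
  note medians = new_leaf_vs_median[OF assms(3) i t(1,2) this, unfolded t(3)]
  show ?thesis
    using right_of_iff[OF assms(3-5)] key_vs_median medians by (meson linorder_neqE_nat)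
qed

end
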